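(* The closed-loop SMP system $x_{t+1}=(A_t(\theta_t)-B_t(\theta_t)K)x_t$ is robustly mean-square stable if and only if its expanded system $\tilde x_{t+1}=\mathcal{C}(F(\tilde\theta_t,K))\tilde x_t$ is robustly stable.
   Context: Let $n,m,d_\theta$ be positive integers and $\mathbb{S}_\theta\subset\mathbb{R}^{d_\theta}$. Consider $x_{t+1}=A_t(\theta_t)x_t+B_t(\theta_t)u_t$, $t=0,1,2,\dots$, with $x_t\in\mathbb{R}^n$, $u_t\in\mathbb{R}^m$, deterministic $x_0$, uncertain $\theta_t\in\mathbb{S}_\theta$. The random vector $v_t(\theta_t):=\mathrm{vec}([A_t(\theta_t),B_t(\theta_t)])\in\mathbb{R}^{n(n+m)}$ has a Lebesgue-measurable conditional density $p(v_t\mid\theta_t)$, and for every $s\ge1$ the conditional density of $(v_0,\dots,v_s)$ given $(\theta_0,\theta_1,\dots)$ is $\prod_{t=0}^sp(v_t\mid\theta_t)$; $\mathrm{E}[\cdot|_{\theta_\bullet}]$ is conditional expectation given $(\theta_0,\theta_1,\dots)$. $\mathrm{vec}$ stacks columns; $\mathrm{vech}(X)$ stacks columnwise the entries on and below the diagonal. $\mathbb{P}_N:=\{\varphi\in\mathbb{R}^N:\varphi_k\ge0,\sum_k\varphi_k=1\}$. The system is SMP: there exist $N$, symmetric $M^{(1)},\dots,M^{(N)}\in\mathbb{R}^{n(n+m)\times n(n+m)}$, and $\phi:\mathbb{S}_\theta\to\mathbb{P}_N$ with $\mathrm{E}[v_tv_t^\top|_{\theta_\bullet}]=\sum_k[\phi(\theta_t)]_kM^{(k)}$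 for all $t$ and all sequences in $\mathbb{S}_\theta$. It is time-invariant (TI) if $\theta_t=\theta$ is constant in $t$ (then all parameter sequences below are constant), time-varying (TV) otherwise. For $K\in\mathbb{R}^{m\times n}$, the closed loop ($u_t=-Kx_t$) is $x_{t+1}=(A_t(\theta_t)-B_t(\theta_t)K)x_t$. It is robustly mean-square stable if for all $x_0\in\mathbb{R}^n$ and all $\theta_0,\theta_1,\dots\in\mathbb{S}_\theta$, $\lim_{t\to\infty}\mathrm{E}[\|x_t\|^2|_{\theta_\bullet}]=0$. Expanded system: $\tilde n=n(n+1)/2$; $E_e\in\mathbb{R}^{\tilde n\times n^2}$ with $E_e\mathrm{vec}(X)=\mathrm{vech}(X)$ for all $X\in\mathbb{R}^{n\times n}$; $D\in\mathbb{R}^{n^2\times\tilde n}$ with $D\mathrm{vech}(Y)=\mathrm{vec}(Y)$ for symmetric $Y$; $\mathcal{C}(Y):=E_eYD$. With blocks $M^{(k)}_{i,j}\in\mathbb{R}^{n\times n}$ ($i,j\le n+m$) of $M^{(k)}$, define $F^{(k)}_{aa},F^{(k)}_{ab},F^{(k)}_{ba},F^{(k)}_{bb}$ by: column $n(j-1)+i$ of $F^{(k)}_{aa}$ is $\mathrm{vec}(M^{(k)}_{i,j})$; column $m(j-1)+i'$ of $F^{(k)}_{ab}$ is $\mathrm{vec}(M^{(k)}_{n+i',j})$; column $n(j'-1)+i$ of $F^{(k)}_{ba}$ is $\mathrm{vec}(M^{(k)}_{i,n+j'})$; column $m(j'-1)+i'$ of $F^{(k)}_{bb}$ is $\mathrm{vec}(M^{(k)}_{n+i',n+j'})$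 ($i,j\le n$, $i',j'\le m$). $F^{(k)}(K):=F^{(k)}_{aa}-F^{(k)}_{ab}(I_n\otimes K)-F^{(k)}_{ba}(K\otimes I_n)+F^{(k)}_{bb}(K\otimes K)$, $F(\tilde\theta,K):=\sum_k[\tilde\theta]_kF^{(k)}(K)$. Expanded system: $\tilde x_{t+1}=\mathcal{C}(F(\tilde\theta_t,K))\tilde x_t$, $\tilde x_t\in\mathbb{R}^{\tilde n}$, $\tilde\theta_t\in\tilde{\mathbb{S}}:=\{\phi(\theta):\theta\in\mathbb{S}_\theta\}$; it is TI/TV when the SMP system is. It is robustly stable if for all $\tilde x_0\in\mathbb{R}^{\tilde n}$ and all $\tilde\theta_0,\tilde\theta_1,\dots\in\tilde{\mathbb{S}}$, $\lim_{t\to\infty}\|\tilde x_t\|=0$. *)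

theory Defs
  imports "HOL-Probability.Probability"
begin

text \<open>Conventions: all indices are 0-based. Vectors are functions nat => real, matrices are
functions nat => nat => real (row, column); dimensions are carried explicitly and only
entries within the stated bounds are ever used.\<close>

definition lebN :: "nat \<Rightarrow> (nat \<Rightarrow> real) measure" where
  "lebN N = completion (PiM {..<N} (\<lambda>_. lborel))"

definition sqnorm :: "nat \<Rightarrow> (nat \<Rightarrow> real) \<Rightarrow> real" where
  "sqnorm d x = (\<Sum>i<d. (x i)\<^sup>2)"

text \<open>v = vec([A,B]) (column stacking), [A,B] of size n x (n+m).\<close>
definition Amat :: "nat \<Rightarrow> (nat \<Rightarrow> real) \<Rightarrow> nat \<Rightarrow> nat \<Rightarrow> real" where
  "Amat n v i j = v (j * n + i)"

definition Bmat :: "nat \<Rightarrow> (nat \<Rightarrow> real) \<Rightarrow> nat \<Rightarrow> nat \<Rightarrow> real" where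
  "Bmat n v i j = v ((n + j) * n + i)"

definition cl_step :: "nat \<Rightarrow> nat \<Rightarrow> (nat \<Rightarrow> nat \<Rightarrow> real) \<Rightarrow> (nat \<Rightarrow> real) \<Rightarrow> (nat \<Rightarrow> real) \<Rightarrow> nat \<Rightarrow> real" where
  "cl_step n m K v x = (\<lambda>i. \<Sum>j<n. (Amat n v i j - (\<Sum>l<m. Bmat n v i l * K l j)) * x j)"

text \<open>State x_t as a function of the realisations w s = v_s (s < t).\<close>
primrec xtraj :: "nat \<Rightarrow> nat \<Rightarrow> (nat \<Rightarrow> nat \<Rightarrow> real) \<Rightarrow> (nat \<Rightarrow> real) \<Rightarrow> (nat \<Rightarrow> nat \<Rightarrow> real) \<Rightarrow> nat \<Rightarrow> nat \<Rightarrow> real" where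
  "xtraj n m K x0 w 0 = x0"
| "xtraj n m K x0 w (Suc t) = cl_step n m K (w t) (xtraj n m K x0 w t)"

text \<open>Conditional law of v_t given theta_t = th: density p th w.r.t. Lebesgue measure.\<close>
definition vlaw :: "nat \<Rightarrow> ('p \<Rightarrow> (nat \<Rightarrow> real) \<Rightarrow> real) \<Rightarrow> 'p \<Rightarrow> (nat \<Rightarrow> real) measure" where
  "vlaw N p th = density (lebN N) (\<lambda>v. ennreal (p th v))"

text \<open>Conditional joint law of (v_0,...,v_{t-1}) given the parameter sequence ths:
  density prod_{s<t} p(v_s | ths s) w.r.t. Lebesgue measure.\<close>
definition traj_law :: "nat \<Rightarrow> ('p \<Rightarrow> (nat \<Rightarrow> real) \<Rightarrow> real) \<Rightarrow> (nat \<Rightarrow> 'p) \<Rightarrow> nat \<Rightarrow> (nat \<Rightarrow> nat \<Rightarrow> real) measure" where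
  "traj_law N p ths t = density (PiM {..<t} (\<lambda>_. lebN N)) (\<lambda>w. ennreal (\<Prod>s<t. p (ths s) (w s)))"

text \<open>E[ ||x_t||^2 | theta_bullet ].\<close>
definition cond_sq_moment :: "nat \<Rightarrow> nat \<Rightarrow> (nat \<Rightarrow> nat \<Rightarrow> real) \<Rightarrow> ('p \<Rightarrow> (nat \<Rightarrow> real) \<Rightarrow> real)
    \<Rightarrow> (nat \<Rightarrow> 'p) \<Rightarrow> (nat \<Rightarrow> real) \<Rightarrow> nat \<Rightarrow> ennreal" where
  "cond_sq_moment n m K p ths x0 t =
     (\<integral>\<^sup>+ w. ennreal (sqnorm n (xtraj n m K x0 w t)) \<partial>traj_law (n * (n + m)) p ths t)"

text \<open>Admissible parameter sequences: values in S, constant if the system is time-invariant.\<close>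
definition adm :: "bool \<Rightarrow> 'a set \<Rightarrow> (nat \<Rightarrow> 'a) \<Rightarrow> bool" where
  "adm ti S s \<longleftrightarrow> (\<forall>t. s t \<in> S) \<and> (ti \<longrightarrow> (\<forall>t. s t = s 0))"

definition robust_ms_stable :: "nat \<Rightarrow> nat \<Rightarrow> (nat \<Rightarrow> nat \<Rightarrow> real) \<Rightarrow> ('p \<Rightarrow> (nat \<Rightarrow> real) \<Rightarrow> real)
    \<Rightarrow> 'p set \<Rightarrow> bool \<Rightarrow> bool" where
  "robust_ms_stable n m K p S ti \<longleftrightarrow>
     (\<forall>x0 ths. adm ti S ths \<longrightarrow> (cond_sq_moment n m K p ths x0 \<longlonglongrightarrow> 0))"

definition ntil :: "nat \<Rightarrow> nat" where
  "ntil n = n * (n + 1) div 2"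

text \<open>Position of entry (i,j), i >= j, in vech (column-wise lower triangle).\<close>
definition vech_idx :: "nat \<Rightarrow> nat \<Rightarrow> nat \<Rightarrow> nat" where
  "vech_idx n i j = j * n - j * (j - 1) div 2 + (i - j)"

definition mmul :: "nat \<Rightarrow> (nat \<Rightarrow> nat \<Rightarrow> real) \<Rightarrow> (nat \<Rightarrow> nat \<Rightarrow> real) \<Rightarrow> nat \<Rightarrow> nat \<Rightarrow> real" where
  "mmul q A B = (\<lambda>i j. \<Sum>l<q. A i l * B l j)"

definition Iden :: "nat \<Rightarrow> nat \<Rightarrow> real" where
  "Iden i j = (if i = j then 1 else 0)"

text \<open>Kronecker product A (x) B where B has r rows and s columns.\<close>
definition kron :: "nat \<Rightarrow> nat \<Rightarrow> (nat \<Rightarrow> nat \<Rightarrow> real) \<Rightarrow> (nat \<Rightarrow> nat \<Rightarrow> real) \<Rightarrow> nat \<Rightarrow> nat \<Rightarrow> real" where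
  "kron r s A B = (\<lambda>i j. A (i div r) (j div s) * B (i mod r) (j mod s))"

text \<open>Elimination matrix E_e (ntil x n^2): E_e vec(X) = vech(X).\<close>
definition Ee :: "nat \<Rightarrow> nat \<Rightarrow> nat \<Rightarrow> real" where
  "Ee n r c = (if \<exists>i j. i < n \<and> j \<le> i \<and> r = vech_idx n i j \<and> c = j * n + i then 1 else 0)"

text \<open>Duplication matrix D (n^2 x ntil): D vech(Y) = vec(Y) for symmetric Y.\<close>
definition Dm :: "nat \<Rightarrow> nat \<Rightarrow> nat \<Rightarrow> real" where
  "Dm n c r = (if \<exists>i j. i < n \<and> j < n \<and> c = j * n + i \<and> r = vech_idx n (max i j) (min i j) then 1 else 0)"

definition Ccal :: "nat \<Rightarrow> (nat \<Rightarrow> nat \<Rightarrow> real) \<Rightarrow> nat \<Rightarrow> nat \<Rightarrow> real" where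
  "Ccal n Y = mmul (n^2) (mmul (n^2) (Ee n) Y) (Dm n)"

definition Mblk :: "nat \<Rightarrow> (nat \<Rightarrow> nat \<Rightarrow> real) \<Rightarrow> nat \<Rightarrow> nat \<Rightarrow> nat \<Rightarrow> nat \<Rightarrow> real" where
  "Mblk n M i j r c = M (i * n + r) (j * n + c)"

text \<open>Column j*n+i of F_aa is vec(M_{i,j}).\<close>
definition Faa :: "nat \<Rightarrow> (nat \<Rightarrow> nat \<Rightarrow> real) \<Rightarrow> nat \<Rightarrow> nat \<Rightarrow> real" where
  "Faa n M = (\<lambda>r c. Mblk n M (c mod n) (c div n) (r mod n) (r div n))"

text \<open>Column j*m+i' of F_ab is vec(M_{n+i',j}).\<close>
definition Fab :: "nat \<Rightarrow> nat \<Rightarrow> (nat \<Rightarrow> nat \<Rightarrow> real) \<Rightarrow> nat \<Rightarrow> nat \<Rightarrow> real" where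
  "Fab n m M = (\<lambda>r c. Mblk n M (n + c mod m) (c div m) (r mod n) (r div n))"

text \<open>Column j'*n+i of F_ba is vec(M_{i,n+j'}).\<close>
definition Fba :: "nat \<Rightarrow> nat \<Rightarrow> (nat \<Rightarrow> nat \<Rightarrow> real) \<Rightarrow> nat \<Rightarrow> nat \<Rightarrow> real" where
  "Fba n m M = (\<lambda>r c. Mblk n M (c mod n) (n + c div n) (r mod n) (r div n))"

text \<open>Column j'*m+i' of F_bb is vec(M_{n+i',n+j'}).\<close>
definition Fbb :: "nat \<Rightarrow> nat \<Rightarrow> (nat \<Rightarrow> nat \<Rightarrow> real) \<Rightarrow> nat \<Rightarrow> nat \<Rightarrow> real" where
  "Fbb n m M = (\<lambda>r c. Mblk n M (n + c mod m) (n + c div m) (r mod n) (r div n))"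

definition Fk :: "nat \<Rightarrow> nat \<Rightarrow> (nat \<Rightarrow> nat \<Rightarrow> real) \<Rightarrow> (nat \<Rightarrow> nat \<Rightarrow> real) \<Rightarrow> nat \<Rightarrow> nat \<Rightarrow> real" where
  "Fk n m M K = (\<lambda>r c. Faa n M r c
      - mmul (n * m) (Fab n m M) (kron m n Iden K) r c
      - mmul (m * n) (Fba n m M) (kron n n K Iden) r c
      + mmul (m * m) (Fbb n m M) (kron m n K K) r c)"

definition Fth :: "nat \<Rightarrow> nat \<Rightarrow> nat \<Rightarrow> (nat \<Rightarrow> nat \<Rightarrow> nat \<Rightarrow> real) \<Rightarrow> (nat \<Rightarrow> real)
    \<Rightarrow> (nat \<Rightarrow> nat \<Rightarrow> real) \<Rightarrow> nat \<Rightarrow> nat \<Rightarrow> real" where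
  "Fth n m N M th K = (\<lambda>r c. \<Sum>k<N. th k * Fk n m (M k) K r c)"

primrec exp_traj :: "nat \<Rightarrow> nat \<Rightarrow> nat \<Rightarrow> (nat \<Rightarrow> nat \<Rightarrow> nat \<Rightarrow> real) \<Rightarrow> (nat \<Rightarrow> nat \<Rightarrow> real)
    \<Rightarrow> (nat \<Rightarrow> real) \<Rightarrow> (nat \<Rightarrow> nat \<Rightarrow> real) \<Rightarrow> nat \<Rightarrow> nat \<Rightarrow> real" where
  "exp_traj n m N M K xt0 ths 0 = xt0"
| "exp_traj n m N M K xt0 ths (Suc t) =
     (\<lambda>i. \<Sum>j<ntil n. Ccal n (Fth n m N M (ths t) K) i j * exp_traj n m N M K xt0 ths t j)"

definition robustly_stable_exp :: "nat \<Rightarrow> nat \<Rightarrow> nat \<Rightarrow> (nat \<Rightarrow> nat \<Rightarrow> nat \<Rightarrow> real)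
    \<Rightarrow> (nat \<Rightarrow> nat \<Rightarrow> real) \<Rightarrow> (nat \<Rightarrow> real) set \<Rightarrow> bool \<Rightarrow> bool" where
  "robustly_stable_exp n m N M K Stil ti \<longleftrightarrow>
     (\<forall>xt0 ths. adm ti Stil ths \<longrightarrow>
        ((\<lambda>t. sqrt (sqnorm (ntil n) (exp_traj n m N M K xt0 ths t))) \<longlonglongrightarrow> 0))"

end

(*
  Write Phi_t = A_t - B_t K.  Given the parameter sequence, v_t is independent of x_t, which is a
  function of v_0, ..., v_(t-1); hence the conditional second-moment matrix X_t = E[x_t x_t^T]
  satisfies X_(t+1) = E[Phi_t X_t Phi_t^T], and the entries of the right-hand side are linear in
  E[v_t v_t^T] = sum_k phi(theta_t)_k M^(k).  On vech of the symmetric matrix X_t this recursion is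
  exactly the expanded system started at vech(x_0 x_0^T).  As E||x_t||^2 = tr X_t and
  |X_t(a,b)| <= tr X_t, mean-square convergence from x_0 is convergence of the expanded state from
  vech(x_0 x_0^T).  These initial states span R^ntil by polarization, and the expanded dynamics is
  linear, so this is convergence from every initial state.
*)
theory Submission
  imports Defs
begin

section \<open>Product measures and the conditional law of the trajectory\<close>

lemma (in pair_sigma_finite) has_bochner_integral_mult_fst_snd:
  fixes f :: "'a \<Rightarrow> real" and g :: "'b \<Rightarrow> real"
  assumes f: "has_bochner_integral M1 f A" and g: "has_bochner_integral M2 g B"
  shows "has_bochner_integral (M1 \<Otimes>\<^sub>M M2) (\<lambda>x. f (fst x) * g (snd x)) (A * B)"
proof -
  have fi: "integrable M1 f" and gi: "integrable M2 g"
    using f g by (simp_all add: has_bochner_integral_iff)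
  then have [measurable]: "f \<in> borel_measurable M1" "g \<in> borel_measurable M2"
    by auto
  have "integrable (M1 \<Otimes>\<^sub>M M2) (\<lambda>x. f (fst x) * g (snd x))"
  proof (rule integrableI_bounded)
    have "(\<integral>\<^sup>+ x. ennreal (norm (f (fst x) * g (snd x))) \<partial>(M1 \<Otimes>\<^sub>M M2))
        = (\<integral>\<^sup>+ x. ennreal (norm (f x)) * (\<integral>\<^sup>+ y. ennreal (norm (g y)) \<partial>M2) \<partial>M1)"
      by (subst M2.nn_integral_fst[symmetric])
        (auto simp: ennreal_mult abs_mult intro!: nn_integral_cong nn_integral_cmult)
    also have "\<dots> = (\<integral>\<^sup>+ x. ennreal (norm (f x)) \<partial>M1) * (\<integral>\<^sup>+ y. ennreal (norm (g y)) \<partial>M2)"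
      by (rule nn_integral_multc) simp
    also have "\<dots> < \<infinity>"
      using fi gi unfolding integrable_iff_bounded by (simp add: ennreal_mult_less_top)
    finally show "(\<integral>\<^sup>+ x. ennreal (norm (f (fst x) * g (snd x))) \<partial>(M1 \<Otimes>\<^sub>M M2)) < \<infinity>" .
  qed simp
  moreover from this have "integral\<^sup>L (M1 \<Otimes>\<^sub>M M2) (\<lambda>x. f (fst x) * g (snd x)) = A * B"
    using f g by (simp add: integral_fst'[symmetric] has_bochner_integral_integral_eq)
  ultimately show ?thesis
    by (simp add: has_bochner_integral_iff)
qed

lemma abs_integral_mult_le:
  fixes f g :: "'a \<Rightarrow> real"
  assumes "integrable \<mu> (\<lambda>x. f x * f x)" "integrable \<mu> (\<lambda>x. g x * g x)" "integrable \<mu> (\<lambda>x. f x * g x)"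
  shows "\<bar>\<integral>x. f x * g x \<partial>\<mu>\<bar> \<le> ((\<integral>x. f x * f x \<partial>\<mu>) + (\<integral>x. g x * g x \<partial>\<mu>)) / 2"
proof -
  have "\<bar>\<integral>x. f x * g x \<partial>\<mu>\<bar> \<le> (\<integral>x. \<bar>f x * g x\<bar> \<partial>\<mu>)"
    using integral_norm_bound[of \<mu> "\<lambda>x. f x * g x"] by simp
  also have "\<dots> \<le> (\<integral>x. (f x * f x + g x * g x) / 2 \<partial>\<mu>)"
  proof (rule integral_mono)
    fix x show "\<bar>f x * g x\<bar> \<le> (f x * f x + g x * g x) / 2"
      using sum_squares_bound[of "\<bar>f x\<bar>" "\<bar>g x\<bar>"] by (simp add: power2_eq_square abs_mult)
  qed (use assms in auto)
  also have "\<dots> = ((\<integral>x. f x * f x \<partial>\<mu>) + (\<integral>x. g x * g x \<partial>\<mu>)) / 2"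
    using assms by simp
  finally show ?thesis .
qed

lemma sigma_finite_lebN: "sigma_finite_measure (lebN d)"
proof -
  interpret F: finite_product_sigma_finite "\<lambda>_. lborel" "{..<d}" by standard auto
  obtain A where "countable A" "A \<subseteq> sets (PiM {..<d} (\<lambda>_. lborel))"
    "\<Union>A = space (PiM {..<d} (\<lambda>_. lborel :: real measure))"
    "\<forall>a\<in>A. emeasure (PiM {..<d} (\<lambda>_. lborel)) a \<noteq> \<infinity>"
    using F.sigma_finite_countable by blast
  then show ?thesis unfolding lebN_def
    by (intro sigma_finite_measure.intro) (auto intro!: exI[of _ A])
qed

lemma measurable_component_lebN: "k < d \<Longrightarrow> (\<lambda>v. v k) \<in> borel_measurable (lebN d)"
  unfolding lebN_def by (intro measurable_completion) simp

lemma measurable_fun_upd_lessThan[measurable]: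
  "(\<lambda>x. (fst x)(t := snd x)) \<in> PiM {..<t} (\<lambda>_::nat. M) \<Otimes>\<^sub>M M \<rightarrow>\<^sub>M PiM {..<Suc t} (\<lambda>_. M)"
  by (rule measurable_fun_upd[where J="{..<t}"]) (auto simp: lessThan_Suc)

locale traj_model =
  fixes d :: nat and p :: "'a \<Rightarrow> (nat \<Rightarrow> real) \<Rightarrow> real" and ths :: "nat \<Rightarrow> 'a"
  assumes density_measurable[measurable]: "\<And>s. p (ths s) \<in> borel_measurable (lebN d)"
    and density_nonneg: "\<And>s v. v \<in> space (lebN d) \<Longrightarrow> 0 \<le> p (ths s) v"
    and density_normalized: "\<And>s. (\<integral>\<^sup>+ v. ennreal (p (ths s) v) \<partial>lebN d) = 1"
begin

abbreviation Q :: "nat \<Rightarrow> (nat \<Rightarrow> real) measure" where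
  "Q s \<equiv> vlaw d p (ths s)"

abbreviation P :: "nat \<Rightarrow> (nat \<Rightarrow> nat \<Rightarrow> real) measure" where
  "P t \<equiv> traj_law d p ths t"

lemma sets_P[measurable_cong]: "sets (P t) = sets (PiM {..<t} (\<lambda>_. lebN d))"
  unfolding traj_law_def by simp

lemma sets_Q[measurable_cong]: "sets (Q s) = sets (lebN d)"
  unfolding vlaw_def by simp

lemma prob_space_Q: "prob_space (Q s)"
proof
  have "emeasure (Q s) (space (Q s)) = (\<integral>\<^sup>+ v. ennreal (p (ths s) v) * indicator (space (lebN d)) v \<partial>lebN d)"
    unfolding vlaw_def by (subst emeasure_density) auto
  also have "\<dots> = 1"
    using density_normalized[of s] by (subst nn_integral_cong[where v="\<lambda>v. ennreal (p (ths s) v)"]) auto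
  finally show "emeasure (Q s) (space (Q s)) = 1" .
qed

lemma measurable_density_prod[measurable]:
  assumes "{..<t} \<subseteq> T"
  shows "(\<lambda>w. \<Prod>s<t. p (ths s) (w s)) \<in> borel_measurable (PiM T (\<lambda>_::nat. lebN d))"
proof -
  have "(\<lambda>w. p (ths s) (w s)) \<in> borel_measurable (PiM T (\<lambda>_::nat. lebN d))" if "s < t" for s
    using measurable_compose[OF _ density_measurable] assms that by auto
  then show ?thesis by measurable
qed

lemma density_prod_nonneg:
  assumes "w \<in> space (PiM {..<t} (\<lambda>_::nat. lebN d))"
  shows "0 \<le> (\<Prod>s<t. p (ths s) (w s))"
proof (rule prod_nonneg)
  fix s assume "s \<in> {..<t}"
  with assms have "w s \<in> space (lebN d)" by (auto simp: space_PiM)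
  then show "0 \<le> p (ths s) (w s)" by (rule density_nonneg)
qed

lemma nn_integral_P_Suc:
  assumes f[measurable]: "f \<in> borel_measurable (PiM {..<Suc t} (\<lambda>_. lebN d))"
  shows "integral\<^sup>N (P (Suc t)) f = (\<integral>\<^sup>+ w. \<integral>\<^sup>+ v. f (w(t:=v)) \<partial>Q t \<partial>P t)"
proof -
  interpret PS: product_sigma_finite "\<lambda>_::nat. lebN d"
    by (intro product_sigma_finite.intro sigma_finite_lebN)
  interpret L: sigma_finite_measure "lebN d" by (rule sigma_finite_lebN)
  let ?L = "\<lambda>t. PiM {..<t} (\<lambda>_::nat. lebN d)"
  have f_insert[measurable]: "f \<in> borel_measurable (PiM (insert t {..<t}) (\<lambda>_. lebN d))"
    using f by (simp add: lessThan_Suc)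
  let ?D = "\<lambda>t w. ennreal (\<Prod>s<t. p (ths s) (w s))"
  have [measurable]: "(\<lambda>v. f (w(t:=v))) \<in> borel_measurable (lebN d)" if "w \<in> space (?L t)" for w
    using measurable_comp[OF measurable_component_update[OF that, of t] f_insert]
    by (simp add: comp_def)
  have D_Suc: "ennreal ((\<Prod>s<t. p (ths s) (w s)) * p (ths t) v) = ?D t w * ennreal (p (ths t) v)"
    if "w \<in> space (?L t)" "v \<in> space (lebN d)" for w v
    using density_prod_nonneg[OF that(1)] density_nonneg[OF that(2)] by (simp add: ennreal_mult)
  have "integral\<^sup>N (P (Suc t)) f = (\<integral>\<^sup>+ w. ?D (Suc t) w * f w \<partial>PiM (insert t {..<t}) (\<lambda>_. lebN d))"
    unfolding traj_law_def by (subst nn_integral_density) (auto simp: lessThan_Suc)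
  also have "\<dots> = (\<integral>\<^sup>+ w. \<integral>\<^sup>+ v. ?D t w * (ennreal (p (ths t) v) * f (w(t:=v))) \<partial>lebN d \<partial>?L t)"
    by (subst PS.product_nn_integral_insert)
      (auto simp: lessThan_Suc[symmetric] D_Suc mult.assoc intro!: nn_integral_cong)
  also have "\<dots> = (\<integral>\<^sup>+ w. ?D t w * \<integral>\<^sup>+ v. ennreal (p (ths t) v) * f (w(t:=v)) \<partial>lebN d \<partial>?L t)"
    by (intro nn_integral_cong nn_integral_cmult) measurable
  also have "\<dots> = (\<integral>\<^sup>+ w. \<integral>\<^sup>+ v. ennreal (p (ths t) v) * f (w(t:=v)) \<partial>lebN d \<partial>P t)"
    unfolding traj_law_def by (rule nn_integral_density[symmetric]) measurable
  also have "\<dots> = (\<integral>\<^sup>+ w. \<integral>\<^sup>+ v. f (w(t:=v)) \<partial>Q t \<partial>P t)"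
    unfolding vlaw_def by (intro nn_integral_cong nn_integral_density[symmetric]) (auto simp: traj_law_def)
  finally show ?thesis .
qed

lemma measurable_fun_upd_P_Q[measurable]:
  "(\<lambda>x. (fst x)(t := snd x)) \<in> P t \<Otimes>\<^sub>M Q t \<rightarrow>\<^sub>M PiM {..<Suc t} (\<lambda>_. lebN d)"
  by (subst measurable_cong_sets[OF sets_pair_measure_cong[OF sets_P sets_Q] refl]) simp

lemma P_Suc_distr: "P (Suc t) = distr (P t \<Otimes>\<^sub>M Q t) (PiM {..<Suc t} (\<lambda>_. lebN d)) (\<lambda>(w, v). w(t:=v))"
proof (rule measure_eqI)
  interpret Qt: prob_space "Q t" by (rule prob_space_Q)
  show "sets (P (Suc t)) = sets (distr (P t \<Otimes>\<^sub>M Q t) (PiM {..<Suc t} (\<lambda>_. lebN d)) (\<lambda>(w, v). w(t:=v)))"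
    by (simp add: traj_law_def)
  fix A assume "A \<in> sets (P (Suc t))"
  then have [measurable]: "A \<in> sets (PiM {..<Suc t} (\<lambda>_. lebN d))" by (simp add: traj_law_def)
  have "emeasure (P (Suc t)) A = integral\<^sup>N (P (Suc t)) (indicator A)"
    by (simp add: traj_law_def)
  also have "\<dots> = (\<integral>\<^sup>+ w. \<integral>\<^sup>+ v. indicator A (w(t:=v)) \<partial>Q t \<partial>P t)"
    by (rule nn_integral_P_Suc) measurable
  also have "\<dots> = (\<integral>\<^sup>+ x. indicator A ((fst x)(t := snd x)) \<partial>(P t \<Otimes>\<^sub>M Q t))"
    by (subst Qt.nn_integral_fst[symmetric]) auto
  also have "\<dots> = integral\<^sup>N (distr (P t \<Otimes>\<^sub>M Q t) (PiM {..<Suc t} (\<lambda>_. lebN d)) (\<lambda>(w, v). w(t:=v))) (indicator A)"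
    by (subst nn_integral_distr) (auto simp: case_prod_beta)
  also have "\<dots> = emeasure (distr (P t \<Otimes>\<^sub>M Q t) (PiM {..<Suc t} (\<lambda>_. lebN d)) (\<lambda>(w, v). w(t:=v))) A"
    by (subst nn_integral_indicator) auto
  finally show "emeasure (P (Suc t)) A = emeasure (distr (P t \<Otimes>\<^sub>M Q t) (PiM {..<Suc t} (\<lambda>_. lebN d)) (\<lambda>(w, v). w(t:=v))) A" .
qed

lemma prob_space_P: "prob_space (P t)"
proof (induction t)
  case 0
  show ?case
    by standard (auto simp: traj_law_def emeasure_density PiM_empty)
next
  case (Suc t)
  interpret Pt: prob_space "P t" by (rule Suc)
  interpret Qt: prob_space "Q t" by (rule prob_space_Q)
  interpret pair_prob_space "P t" "Q t" ..
  show ?case unfolding P_Suc_distr by (rule prob_space_distr) (auto simp: case_prod_beta)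
qed

lemma has_bochner_integral_P_Suc_mult:
  fixes \<alpha> :: "(nat \<Rightarrow> real) \<Rightarrow> real" and \<beta> :: "(nat \<Rightarrow> nat \<Rightarrow> real) \<Rightarrow> real"
  assumes \<alpha>: "has_bochner_integral (Q t) \<alpha> A" and \<beta>: "has_bochner_integral (P t) \<beta> B"
    and \<beta>_measurable: "\<beta> \<in> borel_measurable (PiM {..<Suc t} (\<lambda>_. lebN d))"
    and \<beta>_upd: "\<And>w v. \<beta> (w(t:=v)) = \<beta> w"
  shows "has_bochner_integral (P (Suc t)) (\<lambda>w. \<alpha> (w t) * \<beta> w) (A * B)"
proof -
  interpret Pt: prob_space "P t" by (rule prob_space_P)
  interpret Qt: prob_space "Q t" by (rule prob_space_Q)
  interpret pair_prob_space "P t" "Q t" ..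
  have "\<alpha> \<in> borel_measurable (Q t)"
    using \<alpha> by (auto simp: has_bochner_integral_iff)
  then have [measurable]: "\<alpha> \<in> borel_measurable (lebN d)"
    by (simp add: measurable_cong_sets[OF sets_Q refl])
  have "(\<lambda>w. \<alpha> (w t) * \<beta> w) \<in> borel_measurable (PiM {..<Suc t} (\<lambda>_. lebN d))"
    using \<beta>_measurable by measurable
  moreover have "has_bochner_integral (P t \<Otimes>\<^sub>M Q t) (\<lambda>x. \<alpha> (snd x) * \<beta> (fst x)) (A * B)"
    using has_bochner_integral_mult_fst_snd[OF \<beta> \<alpha>] by (simp add: mult.commute)
  ultimately show ?thesis
    unfolding P_Suc_distr by (intro has_bochner_integral_distr) (auto simp: case_prod_beta \<beta>_upd)
qed

end

section \<open>Entries of the closed-loop gain and of F(theta, K)\<close>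

lemma block_index_less:
  fixes a i n m :: nat
  assumes "a < n" "i < n + m"
  shows "i * n + a < n * (n + m)"
proof -
  have "i * n + a < (i + 1) * n" using assms(1) by simp
  also have "\<dots> \<le> (n + m) * n" using assms(2) by (intro mult_right_mono) auto
  finally show ?thesis by (simp add: mult.commute)
qed

definition cl_gain :: "nat \<Rightarrow> nat \<Rightarrow> (nat \<Rightarrow> nat \<Rightarrow> real) \<Rightarrow> (nat \<Rightarrow> real) \<Rightarrow> nat \<Rightarrow> nat \<Rightarrow> real" where
  "cl_gain n m K v a i = Amat n v a i - (\<Sum>l<m. Bmat n v a l * K l i)"

lemma cl_step_eq: "cl_step n m K v x a = (\<Sum>i<n. cl_gain n m K v a i * x i)"
  by (simp add: cl_step_def cl_gain_def)

(* With A - B K read off from v = vec [A, B], this is the product of the entries (a,i) and (b,j)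
   of A - B K written in terms of G = v v^T; replacing v v^T by M^(k) gives the entry
   (a + b n, i + j n) of F^(k)(K). *)
definition gain_moment :: "nat \<Rightarrow> nat \<Rightarrow> (nat \<Rightarrow> nat \<Rightarrow> real) \<Rightarrow> (nat \<Rightarrow> nat \<Rightarrow> real) \<Rightarrow> nat \<Rightarrow> nat \<Rightarrow> nat \<Rightarrow> nat \<Rightarrow> real" where
  "gain_moment n m K G a i b j = G (i*n + a) (j*n + b)
    - (\<Sum>i'<m. K i' i * G ((n+i')*n + a) (j*n + b))
    - (\<Sum>j'<m. K j' j * G (i*n + a) ((n+j')*n + b))
    + (\<Sum>i'<m. \<Sum>j'<m. K i' i * K j' j * G ((n+i')*n + a) ((n+j')*n + b))"

lemma cl_gain_mult:
  "cl_gain n m K v a i * cl_gain n m K v b j = gain_moment n m K (\<lambda>x y. v x * v y) a i b j"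
  unfolding gain_moment_def cl_gain_def Amat_def Bmat_def
  by (simp add: left_diff_distrib right_diff_distrib sum_distrib_left sum_distrib_right
      sum_product mult.commute mult.left_commute) (subst sum.swap, simp add: ac_simps)

lemma gain_moment_sum:
  "gain_moment n m K (\<lambda>x y. \<Sum>k<N. c k * G k x y) a i b j = (\<Sum>k<N. c k * gain_moment n m K (G k) a i b j)"
  unfolding gain_moment_def
  by (simp add: sum_subtractf sum.distrib sum_distrib_left right_diff_distrib distrib_left
      sum.swap[of _ "{..<N}"] mult.left_commute)

lemma has_bochner_integral_gain_moment:
  assumes G: "\<And>x y. x < n * (n + m) \<Longrightarrow> y < n * (n + m) \<Longrightarrow> has_bochner_integral \<mu> (\<lambda>v. v x * v y) (G x y)"
    and "a < n" "b < n" "i < n" "j < n"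
  shows "has_bochner_integral \<mu> (\<lambda>v. gain_moment n m K (\<lambda>x y. v x * v y) a i b j) (gain_moment n m K G a i b j)"
  unfolding gain_moment_def
  by (intro has_bochner_integral_add has_bochner_integral_diff has_bochner_integral_sum
      has_bochner_integral_mult_right G block_index_less) (use assms(2-) in auto)

lemma Fab_kron_entry:
  assumes "a < n" "b < n" "i < n" "j < n"
  shows "mmul (n * m) (Fab n m M) (kron m n Iden K) (a + b*n) (i + j*n)
      = (\<Sum>i'<m. K i' i * M ((n+i')*n + a) (j*n + b))"
proof -
  have "mmul (n * m) (Fab n m M) (kron m n Iden K) (a + b*n) (i + j*n)
      = (\<Sum>j'<n. if j' = j then (\<Sum>i'<m. K i' i * M ((n+i')*n + a) (j*n + b)) else 0)"
    unfolding mmul_def sum_mult_product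
    using assms by (intro sum.cong refl) (auto simp: Fab_def kron_def Mblk_def Iden_def mult.commute)
  then show ?thesis using assms by (simp add: mult.commute)
qed

lemma Fba_kron_entry:
  assumes "a < n" "b < n" "i < n" "j < n"
  shows "mmul (m * n) (Fba n m M) (kron n n K Iden) (a + b*n) (i + j*n)
      = (\<Sum>j'<m. K j' j * M (i*n + a) ((n+j')*n + b))"
proof -
  have "mmul (m * n) (Fba n m M) (kron n n K Iden) (a + b*n) (i + j*n)
      = (\<Sum>j'<m. \<Sum>i'<n. if i' = i then K j' j * M (i*n + a) ((n+j')*n + b) else 0)"
    unfolding mmul_def sum_mult_product
    using assms by (intro sum.cong refl) (auto simp: Fba_def kron_def Mblk_def Iden_def)
  then show ?thesis using assms by simp
qed

lemma Fbb_kron_entry: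
  assumes "a < n" "b < n" "i < n" "j < n"
  shows "mmul (m * m) (Fbb n m M) (kron m n K K) (a + b*n) (i + j*n)
      = (\<Sum>i'<m. \<Sum>j'<m. K i' i * K j' j * M ((n+i')*n + a) ((n+j')*n + b))"
proof -
  have "mmul (m * m) (Fbb n m M) (kron m n K K) (a + b*n) (i + j*n)
      = (\<Sum>j'<m. \<Sum>i'<m. K i' i * K j' j * M ((n+i')*n + a) ((n+j')*n + b))"
    unfolding mmul_def sum_mult_product
    using assms by (intro sum.cong refl) (auto simp: Fbb_def kron_def Mblk_def)
  also have "\<dots> = (\<Sum>i'<m. \<Sum>j'<m. K i' i * K j' j * M ((n+i')*n + a) ((n+j')*n + b))"
    by (rule sum.swap)
  finally show ?thesis .
qed

lemma Fk_entry:
  assumes "a < n" "b < n" "i < n" "j < n"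
  shows "Fk n m M K (a + b*n) (i + j*n) = gain_moment n m K M a i b j"
  unfolding Fk_def Fab_kron_entry[OF assms] Fba_kron_entry[OF assms] Fbb_kron_entry[OF assms]
  using assms by (simp add: gain_moment_def Faa_def Mblk_def mult.commute)

lemma Fth_entry:
  assumes "a < n" "b < n" "i < n" "j < n"
  shows "Fth n m N M th K (a + b*n) (i + j*n) = gain_moment n m K (\<lambda>x y. \<Sum>k<N. th k * M k x y) a i b j"
  by (simp add: Fth_def gain_moment_sum Fk_entry[OF assms])

section \<open>Half-vectorisation\<close>

primrec vech_col_start :: "nat \<Rightarrow> nat \<Rightarrow> nat" where
  "vech_col_start n 0 = 0"
| "vech_col_start n (Suc j) = vech_col_start n j + (n - j)"

lemma vech_col_start_closed_form: "j \<le> n \<Longrightarrow> 2 * vech_col_start n j + j * (j - 1) = 2 * j * n"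
proof (induction j)
  case (Suc j)
  then have IH: "2 * vech_col_start n j + j * (j - 1) = 2 * j * n" and "j < n" by auto
  have "2 * vech_col_start n (Suc j) + Suc j * j = 2 * vech_col_start n j + j * (j - 1) + 2 * (n - j) + 2 * j"
    by (cases j) (auto simp: algebra_simps)
  also have "\<dots> = 2 * Suc j * n" using IH \<open>j < n\<close> by simp
  finally show ?case by simp
qed simp

lemma vech_idx_eq_col_start: "j \<le> i \<Longrightarrow> i < n \<Longrightarrow> vech_idx n i j = vech_col_start n j + (i - j)"
  using vech_col_start_closed_form[of j n] unfolding vech_idx_def by auto

lemma ntil_eq_col_start: "ntil n = vech_col_start n n"
proof -
  have "n * (n + 1) = 2 * vech_col_start n n"
    using vech_col_start_closed_form[of n n] by (cases n) (auto simp: algebra_simps)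
  then show ?thesis unfolding ntil_def by simp
qed

lemma vech_col_start_mono: "j \<le> j' \<Longrightarrow> vech_col_start n j \<le> vech_col_start n j'"
  by (induction j') (auto simp: le_Suc_eq)

lemma vech_idx_less_ntil: "j \<le> i \<Longrightarrow> i < n \<Longrightarrow> vech_idx n i j < ntil n"
  using vech_col_start_mono[of "Suc j" n n] by (auto simp: vech_idx_eq_col_start ntil_eq_col_start)

lemma vech_idx_inj:
  assumes "j \<le> i" "i < n" "j' \<le> i'" "i' < n" "vech_idx n i j = vech_idx n i' j'"
  shows "i = i' \<and> j = j'"
proof -
  have "\<not> j < j'" if "j \<le> i" "i < n" "j' \<le> i'" "i' < n" "vech_idx n i j = vech_idx n i' j'"
    for i j i' j'
    using that vech_col_start_mono[of "Suc j" j' n] by (auto simp: vech_idx_eq_col_start)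
  then have "j = j'" using assms by (metis linorder_neqE_nat)
  with assms show ?thesis by (simp add: vech_idx_eq_col_start)
qed

lemma vech_idx_surj:
  assumes "q < ntil n"
  obtains i j where "j \<le> i" "i < n" "q = vech_idx n i j"
proof -
  have "k \<le> n \<Longrightarrow> q < vech_col_start n k \<Longrightarrow>
      \<exists>j<k. vech_col_start n j \<le> q \<and> q < vech_col_start n (Suc j)" for k
  proof (induction k)
    case (Suc k)
    show ?case
    proof (cases "q < vech_col_start n k")
      case True
      with Suc show ?thesis by (auto intro: less_SucI)
    next
      case False
      with Suc.prems show ?thesis by (intro exI[of _ k]) auto
    qed
  qed simp
  then obtain j where "j < n" "vech_col_start n j \<le> q" "q < vech_col_start n (Suc j)"
    using assms unfolding ntil_eq_col_start by blast
  then show ?thesis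
    by (intro that[where i="j + (q - vech_col_start n j)" and j=j]) (auto simp: vech_idx_eq_col_start)
qed

(* Arbitrary at positions q >= ntil n. *)
definition vech :: "nat \<Rightarrow> (nat \<Rightarrow> nat \<Rightarrow> real) \<Rightarrow> nat \<Rightarrow> real" where
  "vech n Y q = (SOME y. \<exists>i j. j \<le> i \<and> i < n \<and> q = vech_idx n i j \<and> y = Y i j)"

lemma vech_vech_idx: "j \<le> i \<Longrightarrow> i < n \<Longrightarrow> vech n Y (vech_idx n i j) = Y i j"
  unfolding vech_def by (rule some_equality) (auto dest: vech_idx_inj)

lemma Ee_mult_row:
  assumes "j \<le> i" "i < n"
  shows "(\<Sum>c<n\<^sup>2. Ee n (vech_idx n i j) c * G c r) = G (j*n + i) r"
proof -
  have "j*n + i < n*n"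
    using assms block_index_less[of i n j 0] by simp
  moreover have "Ee n (vech_idx n i j) c * G c r = (if c = j*n + i then G c r else 0)" for c
    using assms unfolding Ee_def by (auto dest: vech_idx_inj)
  ultimately show ?thesis by (simp add: power2_eq_square)
qed

lemma Dm_mult_vech:
  assumes "r < n\<^sup>2" and sym: "\<And>i j. i < n \<Longrightarrow> j < n \<Longrightarrow> Y i j = Y j i"
  shows "(\<Sum>q<ntil n. Dm n r q * vech n Y q) = Y (r mod n) (r div n)"
proof -
  have "0 < n" using assms(1) by (cases n) auto
  then have r: "r mod n < n" "r div n < n"
    using assms(1) by (auto simp: power2_eq_square less_mult_imp_div_less)
  let ?q = "vech_idx n (max (r mod n) (r div n)) (min (r mod n) (r div n))"
  have "Dm n r q * vech n Y q = (if q = ?q then vech n Y q else 0)" for q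
  proof -
    have "(\<exists>i j. i < n \<and> j < n \<and> r = j * n + i \<and> q = vech_idx n (max i j) (min i j)) \<longleftrightarrow> q = ?q"
    proof
      assume "q = ?q"
      then show "\<exists>i j. i < n \<and> j < n \<and> r = j * n + i \<and> q = vech_idx n (max i j) (min i j)"
        using r by (intro exI[of _ "r mod n"] exI[of _ "r div n"]) simp
    qed auto
    then show ?thesis unfolding Dm_def by simp
  qed
  moreover have "?q < ntil n" using r by (intro vech_idx_less_ntil) auto
  ultimately have "(\<Sum>q<ntil n. Dm n r q * vech n Y q) = Y (max (r mod n) (r div n)) (min (r mod n) (r div n))"
    using r by (simp add: vech_vech_idx)
  also have "\<dots> = Y (r mod n) (r div n)"
    using r sym by (cases "r div n \<le> r mod n") (auto simp: max_def min_def)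
  finally show ?thesis .
qed

lemma Ccal_mult_vech:
  assumes "j \<le> i" "i < n" and sym: "\<And>i j. i < n \<Longrightarrow> j < n \<Longrightarrow> Y i j = Y j i"
  shows "(\<Sum>q<ntil n. Ccal n G (vech_idx n i j) q * vech n Y q) = (\<Sum>a<n. \<Sum>b<n. G (i + j*n) (a + b*n) * Y a b)"
proof -
  have "(\<Sum>q<ntil n. Ccal n G (vech_idx n i j) q * vech n Y q)
      = (\<Sum>q<ntil n. \<Sum>r<n\<^sup>2. (\<Sum>c<n\<^sup>2. Ee n (vech_idx n i j) c * G c r) * Dm n r q * vech n Y q)"
    unfolding Ccal_def mmul_def by (simp add: sum_distrib_right)
  also have "\<dots> = (\<Sum>r<n\<^sup>2. G (j*n + i) r * (\<Sum>q<ntil n. Dm n r q * vech n Y q))"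
    by (subst sum.swap) (simp add: Ee_mult_row[OF assms(1,2)] sum_distrib_left mult.assoc)
  also have "\<dots> = (\<Sum>r<n\<^sup>2. G (j*n + i) r * Y (r mod n) (r div n))"
    using sym by (intro sum.cong refl) (simp add: Dm_mult_vech)
  also have "\<dots> = (\<Sum>b<n. \<Sum>a<n. G (i + j*n) (a + b*n) * Y a b)"
    by (simp add: power2_eq_square sum_mult_product add.commute)
  also have "\<dots> = (\<Sum>a<n. \<Sum>b<n. G (i + j*n) (a + b*n) * Y a b)"
    by (rule sum.swap)
  finally show ?thesis .
qed

definition outer :: "(nat \<Rightarrow> real) \<Rightarrow> nat \<Rightarrow> nat \<Rightarrow> real" where
  "outer x i j = x i * x j"

lemma vech_outer_unit:
  assumes "a < n" "q < ntil n"
  shows "vech n (outer (\<lambda>i. if i = a then 1 else 0)) q = (if q = vech_idx n a a then 1 else 0)"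
proof -
  obtain i j where ij: "j \<le> i" "i < n" "q = vech_idx n i j"
    using vech_idx_surj[OF assms(2)] .
  then have "q = vech_idx n a a \<longleftrightarrow> i = a \<and> j = a"
    using vech_idx_inj[OF ij(1,2), where i'=a and j'=a] assms(1) by auto
  with ij show ?thesis
    by (simp add: vech_vech_idx outer_def)
qed

lemma vech_outer_polarization:
  assumes "b < a" "a < n" "q < ntil n"
  shows "vech n (outer (\<lambda>i. if i = a \<or> i = b then 1 else 0)) q
      - vech n (outer (\<lambda>i. if i = a then 1 else 0)) q - vech n (outer (\<lambda>i. if i = b then 1 else 0)) q
    = (if q = vech_idx n a b then 1 else 0)"
proof -
  obtain i j where ij: "j \<le> i" "i < n" "q = vech_idx n i j"
    using vech_idx_surj[OF assms(3)] .
  then have "q = vech_idx n a b \<longleftrightarrow> i = a \<and> j = b"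
    using vech_idx_inj[OF ij(1,2), where i'=a and j'=b] assms(1,2) by auto
  with ij assms(1) show ?thesis
    by (auto simp: vech_vech_idx outer_def)
qed

lemma vech_tendsto_0_iff:
  assumes sym: "\<And>t i j. i < n \<Longrightarrow> j < n \<Longrightarrow> Y t i j = Y t j i"
  shows "(\<forall>q<ntil n. (\<lambda>t. vech n (Y t) q) \<longlonglongrightarrow> 0) \<longleftrightarrow> (\<forall>i<n. \<forall>j<n. (\<lambda>t. Y t i j) \<longlonglongrightarrow> 0)"
proof (intro iffI allI impI)
  fix i j assume vech: "\<forall>q<ntil n. (\<lambda>t. vech n (Y t) q) \<longlonglongrightarrow> 0" and "i < n" "j < n"
  have lower: "(\<lambda>t. Y t i j) \<longlonglongrightarrow> 0" if "j \<le> i" "i < n" for i j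
    using vech[rule_format, OF vech_idx_less_ntil[OF that]] by (simp add: vech_vech_idx[OF that])
  show "(\<lambda>t. Y t i j) \<longlonglongrightarrow> 0"
  proof (cases "j \<le> i")
    case False
    with \<open>i < n\<close> \<open>j < n\<close> have "(\<lambda>t. Y t j i) \<longlonglongrightarrow> 0" by (intro lower) auto
    moreover have "(\<lambda>t. Y t j i) = (\<lambda>t. Y t i j)" using sym \<open>i < n\<close> \<open>j < n\<close> by auto
    ultimately show ?thesis by simp
  qed (use lower \<open>i < n\<close> in blast)
next
  fix q assume entries: "\<forall>i<n. \<forall>j<n. (\<lambda>t. Y t i j) \<longlonglongrightarrow> 0" and "q < ntil n"
  then obtain i j where "j \<le> i" "i < n" "q = vech_idx n i j"
    using vech_idx_surj by blast
  with entries show "(\<lambda>t. vech n (Y t) q) \<longlonglongrightarrow> 0"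
    by (simp add: vech_vech_idx)
qed

section \<open>Second moments of the closed loop\<close>

lemma sqrt_sqnorm_tendsto_0_iff:
  "(\<lambda>t. sqrt (sqnorm d (f t))) \<longlonglongrightarrow> 0 \<longleftrightarrow> (\<forall>q<d. (\<lambda>t. f t q) \<longlonglongrightarrow> 0)"
proof
  assume lim: "(\<lambda>t. sqrt (sqnorm d (f t))) \<longlonglongrightarrow> 0"
  have "\<bar>f t q\<bar> \<le> sqrt (sqnorm d (f t))" if "q < d" for t q
    using real_sqrt_le_mono[OF member_le_sum[of q "{..<d}" "\<lambda>q. (f t q)\<^sup>2"]] that
    by (simp add: sqnorm_def)
  then show "\<forall>q<d. (\<lambda>t. f t q) \<longlonglongrightarrow> 0"
    by (auto intro: Lim_null_comparison[OF _ lim])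
next
  assume "\<forall>q<d. (\<lambda>t. f t q) \<longlonglongrightarrow> 0"
  then have "(\<lambda>t. sqrt (sqnorm d (f t))) \<longlonglongrightarrow> sqrt (\<Sum>q<d. 0\<^sup>2)"
    unfolding sqnorm_def by (intro tendsto_real_sqrt tendsto_sum tendsto_power) auto
  then show "(\<lambda>t. sqrt (sqnorm d (f t))) \<longlonglongrightarrow> 0" by simp
qed

lemma xtraj_fun_upd: "t \<le> s \<Longrightarrow> xtraj n m K x0 (w(s := v)) t = xtraj n m K x0 w t"
  by (induction t) (auto simp: cl_step_def)

lemma xtraj_Suc_mult:
  "xtraj n m K x0 w (Suc t) a * xtraj n m K x0 w (Suc t) b =
    (\<Sum>i<n. \<Sum>j<n. (cl_gain n m K (w t) a i * cl_gain n m K (w t) b j) *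
      (xtraj n m K x0 w t i * xtraj n m K x0 w t j))"
  by (simp only: xtraj.simps cl_step_eq sum_product) (simp add: mult_ac)

locale smp_system = traj_model "n * (n + m)" p ths
  for n m :: nat and p :: "'a \<Rightarrow> (nat \<Rightarrow> real) \<Rightarrow> real" and ths :: "nat \<Rightarrow> 'a" +
  fixes K :: "nat \<Rightarrow> nat \<Rightarrow> real" and N :: nat and M :: "nat \<Rightarrow> nat \<Rightarrow> nat \<Rightarrow> real"
    and \<phi> :: "'a \<Rightarrow> nat \<Rightarrow> real"
  assumes second_moments: "\<And>s x y. x < n * (n + m) \<Longrightarrow> y < n * (n + m) \<Longrightarrow>
    has_bochner_integral (Q s) (\<lambda>v. v x * v y) (\<Sum>k<N. \<phi> (ths s) k * M k x y)"
begin

lemma measurable_cl_gain: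
  "a < n \<Longrightarrow> i < n \<Longrightarrow> (\<lambda>v. cl_gain n m K v a i) \<in> borel_measurable (lebN (n * (n + m)))"
  unfolding cl_gain_def Amat_def Bmat_def
  by (intro borel_measurable_diff borel_measurable_sum borel_measurable_times measurable_component_lebN
      measurable_const block_index_less) auto

lemma measurable_xtraj:
  "a < n \<Longrightarrow> {..<t} \<subseteq> T \<Longrightarrow> (\<lambda>w. xtraj n m K x0 w t a) \<in> borel_measurable (PiM T (\<lambda>_. lebN (n * (n + m))))"
proof (induction t arbitrary: a)
  case (Suc t)
  have "(\<lambda>w. w t) \<in> PiM T (\<lambda>_. lebN (n * (n + m))) \<rightarrow>\<^sub>M lebN (n * (n + m))"
    using Suc.prems by auto
  moreover have "{..<t} \<subseteq> T"
    using Suc.prems by (auto simp: lessThan_Suc)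
  ultimately show ?case
    unfolding xtraj.simps cl_step_eq using Suc.prems
    by (intro borel_measurable_sum borel_measurable_times measurable_compose[OF _ measurable_cl_gain] Suc.IH) auto
qed simp

lemma has_bochner_integral_cl_gain_mult:
  assumes "a < n" "b < n" "i < n" "j < n"
  shows "has_bochner_integral (Q s) (\<lambda>v. cl_gain n m K v a i * cl_gain n m K v b j)
    (Fth n m N M (\<phi> (ths s)) K (a + b*n) (i + j*n))"
  unfolding cl_gain_mult Fth_entry[OF assms]
  by (intro has_bochner_integral_gain_moment second_moments assms)

definition second_moment :: "(nat \<Rightarrow> real) \<Rightarrow> nat \<Rightarrow> nat \<Rightarrow> nat \<Rightarrow> real" where
  "second_moment x0 t a b = (\<integral>w. xtraj n m K x0 w t a * xtraj n m K x0 w t b \<partial>P t)"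

lemma has_bochner_integral_second_moment_Suc:
  assumes IH: "\<And>i j. i < n \<Longrightarrow> j < n \<Longrightarrow> integrable (P t) (\<lambda>w. xtraj n m K x0 w t i * xtraj n m K x0 w t j)"
    and "a < n" "b < n"
  shows "has_bochner_integral (P (Suc t)) (\<lambda>w. xtraj n m K x0 w (Suc t) a * xtraj n m K x0 w (Suc t) b)
    (\<Sum>i<n. \<Sum>j<n. Fth n m N M (\<phi> (ths t)) K (a + b*n) (i + j*n) * second_moment x0 t i j)"
  unfolding xtraj_Suc_mult
proof (intro has_bochner_integral_sum has_bochner_integral_P_Suc_mult)
  fix i j assume "i \<in> {..<n}" "j \<in> {..<n}"
  with assms show "has_bochner_integral (Q t) (\<lambda>v. cl_gain n m K v a i * cl_gain n m K v b j)
      (Fth n m N M (\<phi> (ths t)) K (a + b*n) (i + j*n))"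
    by (intro has_bochner_integral_cl_gain_mult) auto
  from \<open>i \<in> {..<n}\<close> \<open>j \<in> {..<n}\<close> show
    "has_bochner_integral (P t) (\<lambda>w. xtraj n m K x0 w t i * xtraj n m K x0 w t j) (second_moment x0 t i j)"
    "(\<lambda>w. xtraj n m K x0 w t i * xtraj n m K x0 w t j) \<in> borel_measurable (PiM {..<Suc t} (\<lambda>_. lebN (n * (n + m))))"
    by (auto simp: has_bochner_integral_iff second_moment_def IH intro!: borel_measurable_times measurable_xtraj)
qed (simp add: xtraj_fun_upd)

lemma integrable_xtraj_mult:
  "a < n \<Longrightarrow> b < n \<Longrightarrow> integrable (P t) (\<lambda>w. xtraj n m K x0 w t a * xtraj n m K x0 w t b)"
proof (induction t arbitrary: a b)
  case 0
  interpret prob_space "P 0" by (rule prob_space_P)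
  show ?case by simp
next
  case (Suc t)
  show ?case
    by (rule integrable.intros, rule has_bochner_integral_second_moment_Suc) (use Suc in auto)
qed

lemma second_moment_Suc:
  "a < n \<Longrightarrow> b < n \<Longrightarrow> second_moment x0 (Suc t) a b =
    (\<Sum>i<n. \<Sum>j<n. Fth n m N M (\<phi> (ths t)) K (a + b*n) (i + j*n) * second_moment x0 t i j)"
  unfolding second_moment_def[of x0 "Suc t"]
  by (intro has_bochner_integral_integral_eq has_bochner_integral_second_moment_Suc integrable_xtraj_mult)

lemma second_moment_0: "second_moment x0 0 = outer x0"
proof -
  interpret prob_space "P 0" by (rule prob_space_P)
  show ?thesis by (simp add: second_moment_def outer_def fun_eq_iff prob_space)
qed

lemma second_moment_sym: "second_moment x0 t a b = second_moment x0 t b a"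
  unfolding second_moment_def by (simp add: mult.commute)

lemma second_moment_diag_nonneg: "0 \<le> second_moment x0 t a a"
  unfolding second_moment_def by (intro integral_nonneg_AE) auto

lemma abs_second_moment_le_trace:
  assumes "a < n" "b < n"
  shows "\<bar>second_moment x0 t a b\<bar> \<le> (\<Sum>c<n. second_moment x0 t c c)"
proof -
  have "\<bar>second_moment x0 t a b\<bar> \<le> (second_moment x0 t a a + second_moment x0 t b b) / 2"
    unfolding second_moment_def using assms by (intro abs_integral_mult_le integrable_xtraj_mult)
  also have "\<dots> \<le> (\<Sum>c<n. second_moment x0 t c c)"
  proof -
    have "second_moment x0 t c c \<le> (\<Sum>c<n. second_moment x0 t c c)" if "c < n" for c
      using that by (intro member_le_sum second_moment_diag_nonneg) auto
    from this[OF assms(1)] this[OF assms(2)] show ?thesis by simp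
  qed
  finally show ?thesis .
qed

lemma cond_sq_moment_eq_trace: "cond_sq_moment n m K p ths x0 t = ennreal (\<Sum>a<n. second_moment x0 t a a)"
proof -
  have int: "integrable (P t) (\<lambda>w. \<Sum>a<n. xtraj n m K x0 w t a * xtraj n m K x0 w t a)"
    by (intro Bochner_Integration.integrable_sum integrable_xtraj_mult) auto
  have "cond_sq_moment n m K p ths x0 t = (\<integral>\<^sup>+ w. ennreal (\<Sum>a<n. xtraj n m K x0 w t a * xtraj n m K x0 w t a) \<partial>P t)"
    unfolding cond_sq_moment_def sqnorm_def by (simp add: power2_eq_square)
  also have "\<dots> = ennreal (\<integral>w. (\<Sum>a<n. xtraj n m K x0 w t a * xtraj n m K x0 w t a) \<partial>P t)"
    by (rule nn_integral_eq_integral[OF int]) (auto intro!: AE_I2 sum_nonneg)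
  also have "\<dots> = ennreal (\<Sum>a<n. second_moment x0 t a a)"
    unfolding second_moment_def by (subst Bochner_Integration.integral_sum) (auto intro: integrable_xtraj_mult)
  finally show ?thesis .
qed

lemma exp_traj_vech_outer:
  "q < ntil n \<Longrightarrow> exp_traj n m N M K (vech n (outer x0)) (\<lambda>s. \<phi> (ths s)) t q = vech n (second_moment x0 t) q"
proof (induction t arbitrary: q)
  case 0
  then show ?case by (simp add: second_moment_0)
next
  case (Suc t)
  obtain i j where ij: "j \<le> i" "i < n" "q = vech_idx n i j"
    using vech_idx_surj[OF Suc.prems] .
  have "exp_traj n m N M K (vech n (outer x0)) (\<lambda>s. \<phi> (ths s)) (Suc t) q
      = (\<Sum>q'<ntil n. Ccal n (Fth n m N M (\<phi> (ths t)) K) q q' * vech n (second_moment x0 t) q')"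
    using Suc.IH by simp
  also have "\<dots> = (\<Sum>a<n. \<Sum>b<n. Fth n m N M (\<phi> (ths t)) K (i + j*n) (a + b*n) * second_moment x0 t a b)"
    unfolding ij(3) by (rule Ccal_mult_vech[OF ij(1,2) second_moment_sym])
  also have "\<dots> = vech n (second_moment x0 (Suc t)) q"
    using ij by (simp add: second_moment_Suc vech_vech_idx)
  finally show ?case .
qed

lemma trace_second_moment_tendsto_0_iff:
  "(\<lambda>t. \<Sum>a<n. second_moment x0 t a a) \<longlonglongrightarrow> 0 \<longleftrightarrow> (\<forall>a<n. \<forall>b<n. (\<lambda>t. second_moment x0 t a b) \<longlonglongrightarrow> 0)"
proof
  assume trace: "(\<lambda>t. \<Sum>a<n. second_moment x0 t a a) \<longlonglongrightarrow> 0"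
  show "\<forall>a<n. \<forall>b<n. (\<lambda>t. second_moment x0 t a b) \<longlonglongrightarrow> 0"
    by (auto intro!: Lim_null_comparison[OF _ trace] always_eventually abs_second_moment_le_trace)
next
  assume "\<forall>a<n. \<forall>b<n. (\<lambda>t. second_moment x0 t a b) \<longlonglongrightarrow> 0"
  then show "(\<lambda>t. \<Sum>a<n. second_moment x0 t a a) \<longlonglongrightarrow> 0"
    using tendsto_sum[of "{..<n}" "\<lambda>a t. second_moment x0 t a a" "\<lambda>_. 0"] by simp
qed

lemma cond_sq_moment_tendsto_0_iff:
  "cond_sq_moment n m K p ths x0 \<longlonglongrightarrow> 0 \<longleftrightarrow>
    (\<lambda>t. sqrt (sqnorm (ntil n) (exp_traj n m N M K (vech n (outer x0)) (\<lambda>s. \<phi> (ths s)) t))) \<longlonglongrightarrow> 0"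
proof -
  have "cond_sq_moment n m K p ths x0 \<longlonglongrightarrow> 0 \<longleftrightarrow> (\<lambda>t. \<Sum>a<n. second_moment x0 t a a) \<longlonglongrightarrow> 0"
    unfolding cond_sq_moment_eq_trace[abs_def] ennreal_0[symmetric]
    by (intro tendsto_ennreal_iff) (auto intro!: always_eventually sum_nonneg second_moment_diag_nonneg)
  also have "\<dots> \<longleftrightarrow> (\<forall>q<ntil n. (\<lambda>t. vech n (second_moment x0 t) q) \<longlonglongrightarrow> 0)"
    by (simp add: trace_second_moment_tendsto_0_iff vech_tendsto_0_iff second_moment_sym)
  also have "\<dots> \<longleftrightarrow>
      (\<lambda>t. sqrt (sqnorm (ntil n) (exp_traj n m N M K (vech n (outer x0)) (\<lambda>s. \<phi> (ths s)) t))) \<longlonglongrightarrow> 0"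
    by (simp add: sqrt_sqnorm_tendsto_0_iff exp_traj_vech_outer)
  finally show ?thesis .
qed

end

lemma smp_systemI:
  assumes "\<And>s. p (ths s) \<in> borel_measurable (lebN (n * (n + m)))"
    and "\<And>s v. v \<in> space (lebN (n * (n + m))) \<Longrightarrow> 0 \<le> p (ths s) v"
    and "\<And>s. (\<integral>\<^sup>+ v. ennreal (p (ths s) v) \<partial>lebN (n * (n + m))) = 1"
    and "\<And>s x y. x < n * (n + m) \<Longrightarrow> y < n * (n + m) \<Longrightarrow>
      integrable (vlaw (n * (n + m)) p (ths s)) (\<lambda>v. v x * v y)
      \<and> (\<integral>v. v x * v y \<partial>vlaw (n * (n + m)) p (ths s)) = (\<Sum>k<N. \<phi> (ths s) k * M k x y)"
  shows "smp_system n m p ths N M \<phi>"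
  using assms by unfold_locales (auto simp: has_bochner_integral_iff)

section \<open>The expanded system\<close>

lemma exp_traj_cong:
  "(\<And>q. q < ntil n \<Longrightarrow> z q = z' q) \<Longrightarrow> q < ntil n \<Longrightarrow>
    exp_traj n m N M K z th t q = exp_traj n m N M K z' th t q"
  by (induction t arbitrary: q) (auto intro!: sum.cong)

lemma exp_traj_diff:
  "exp_traj n m N M K (\<lambda>q. z q - z' q) th t q = exp_traj n m N M K z th t q - exp_traj n m N M K z' th t q"
  by (induction t arbitrary: q) (simp_all add: right_diff_distrib sum_subtractf)

lemma exp_traj_sum:
  "exp_traj n m N M K (\<lambda>q. \<Sum>k\<in>F. c k * z k q) th t q = (\<Sum>k\<in>F. c k * exp_traj n m N M K (z k) th t q)"
  by (induction t arbitrary: q) (simp_all add: sum_distrib_left sum.swap[of _ "{..<ntil n}"] mult_ac)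

lemma exp_traj_unit_tendsto_0:
  assumes outer: "\<And>x q. q < ntil n \<Longrightarrow> (\<lambda>t. exp_traj n m N M K (vech n (outer x)) th t q) \<longlonglongrightarrow> 0"
    and q': "q' < ntil n" and q: "q < ntil n"
  shows "(\<lambda>t. exp_traj n m N M K (\<lambda>i. if i = q' then 1 else 0) th t q) \<longlonglongrightarrow> 0"
proof -
  let ?E = "\<lambda>z t. exp_traj n m N M K z th t q"
  let ?V = "\<lambda>x. vech n (outer x)"
  let ?e = "\<lambda>a i. if i = a then 1 else (0::real)"
  obtain a b where ab: "b \<le> a" "a < n" "q' = vech_idx n a b"
    using vech_idx_surj[OF q'] .
  show ?thesis
  proof (cases "b = a")
    case True
    then have "?E (?e q') t = ?E (?V (?e a)) t" for t
      using ab q by (intro exp_traj_cong) (auto simp: vech_outer_unit)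
    then show ?thesis using outer[OF q] by simp
  next
    case False
    have "?E (?e q') t = ?E (?V (\<lambda>i. if i = a \<or> i = b then 1 else 0)) t - ?E (?V (?e a)) t - ?E (?V (?e b)) t" for t
      using ab q False unfolding exp_traj_diff[symmetric]
      by (intro exp_traj_cong) (auto simp: vech_outer_polarization)
    then show ?thesis
      using tendsto_diff[OF tendsto_diff[OF outer outer] outer, OF q q q] by simp
  qed
qed

lemma exp_traj_tendsto_0_if_outer:
  assumes outer: "\<And>x. (\<lambda>t. sqrt (sqnorm (ntil n) (exp_traj n m N M K (vech n (outer x)) th t))) \<longlonglongrightarrow> 0"
  shows "(\<lambda>t. sqrt (sqnorm (ntil n) (exp_traj n m N M K z th t))) \<longlonglongrightarrow> 0"
proof -
  let ?E = "\<lambda>z t q. exp_traj n m N M K z th t q"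
  let ?e = "\<lambda>a i. if i = a then 1 else (0::real)"
  have "(\<lambda>t. ?E z t q) \<longlonglongrightarrow> 0" if "q < ntil n" for q
  proof -
    have "z q'' = (\<Sum>q'<ntil n. z q' * ?e q' q'')" if "q'' < ntil n" for q''
    proof -
      have "(\<Sum>q'<ntil n. z q' * ?e q' q'') = (\<Sum>q'<ntil n. if q' = q'' then z q'' else 0)"
        by (intro sum.cong) auto
      with that show ?thesis by simp
    qed
    then have "?E z t q = (\<Sum>q'<ntil n. z q' * ?E (?e q') t q)" for t
      using that unfolding exp_traj_sum[symmetric] by (intro exp_traj_cong)
    moreover have "(\<lambda>t. \<Sum>q'<ntil n. z q' * ?E (?e q') t q) \<longlonglongrightarrow> 0"
      using that outer by (intro tendsto_null_sum tendsto_mult_right_zero exp_traj_unit_tendsto_0)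
        (auto simp: sqrt_sqnorm_tendsto_0_iff)
    ultimately show ?thesis by simp
  qed
  then show ?thesis by (simp add: sqrt_sqnorm_tendsto_0_iff)
qed

lemma adm_image: "adm ti S s \<Longrightarrow> adm ti (f ` S) (\<lambda>t. f (s t))"
  unfolding adm_def by (metis image_eqI)

lemma adm_image_obtain:
  assumes "adm ti (f ` S) s'"
  obtains s where "adm ti S s" "s' = (\<lambda>t. f (s t))"
proof -
  define s where "s t = (SOME x. x \<in> S \<and> f x = s' t)" for t
  have s: "s t \<in> S \<and> f (s t) = s' t" for t
  proof -
    have "s' t \<in> f ` S" using assms by (simp add: adm_def)
    then have "\<exists>x. x \<in> S \<and> f x = s' t" by auto
    then show ?thesis unfolding s_def by (rule someI_ex)
  qed
  have "s t = s 0" if ti for t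
  proof -
    from assms that have "s' t = s' 0" unfolding adm_def by blast
    then show ?thesis unfolding s_def by simp
  qed
  with s have "adm ti S s" unfolding adm_def by blast
  moreover from s have "s' = (\<lambda>t. f (s t))" by auto
  ultimately show ?thesis by (rule that)
qed

theorem theorem2:
  fixes n m N :: nat
    and S :: "(real^'d) set"
    and p :: "real^'d \<Rightarrow> (nat \<Rightarrow> real) \<Rightarrow> real"
    and \<phi> :: "real^'d \<Rightarrow> nat \<Rightarrow> real"
    and M :: "nat \<Rightarrow> nat \<Rightarrow> nat \<Rightarrow> real"
    and K :: "nat \<Rightarrow> nat \<Rightarrow> real"
    and ti :: bool
  assumes "0 < n" and "0 < m" and "0 < N"
    and dens: "\<forall>\<theta>\<in>S. p \<theta> \<in> borel_measurable (lebN (n * (n + m)))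
               \<and> (\<forall>v\<in>space (lebN (n * (n + m))). 0 \<le> p \<theta> v)
               \<and> (\<integral>\<^sup>+ v. ennreal (p \<theta> v) \<partial>lebN (n * (n + m))) = 1"
    and simplex: "\<forall>\<theta>\<in>S. (\<forall>k<N. 0 \<le> \<phi> \<theta> k) \<and> (\<Sum>k<N. \<phi> \<theta> k) = 1"
    and symM: "\<forall>k<N. \<forall>i<n * (n + m). \<forall>j<n * (n + m). M k i j = M k j i"
    and smp: "\<forall>\<theta>\<in>S. \<forall>i<n * (n + m). \<forall>j<n * (n + m).
               integrable (vlaw (n * (n + m)) p \<theta>) (\<lambda>v. v i * v j)
               \<and> (\<integral>v. v i * v j \<partial>vlaw (n * (n + m)) p \<theta>) = (\<Sum>k<N. \<phi> \<theta> k * M k i j)"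
  shows "robust_ms_stable n m K p S ti \<longleftrightarrow> robustly_stable_exp n m N M K (\<phi> ` S) ti"
proof -
  have model: "smp_system n m p ths N M \<phi>" if "adm ti S ths" for ths
    using that dens smp by (intro smp_systemI) (auto simp: adm_def)
  show ?thesis
  proof
    assume ms: "robust_ms_stable n m K p S ti"
    show "robustly_stable_exp n m N M K (\<phi> ` S) ti"
      unfolding robustly_stable_exp_def
    proof (intro allI impI)
      fix z ths' assume "adm ti (\<phi> ` S) ths'"
      then obtain ths where ths: "adm ti S ths" and ths': "ths' = (\<lambda>t. \<phi> (ths t))"
        by (rule adm_image_obtain)
      interpret smp_system n m p ths K N M \<phi> by (rule model[OF ths])
      have "cond_sq_moment n m K p ths x \<longlonglongrightarrow> 0" for x
        using ms ths unfolding robust_ms_stable_def by blast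
      then show "(\<lambda>t. sqrt (sqnorm (ntil n) (exp_traj n m N M K z ths' t))) \<longlonglongrightarrow> 0"
        unfolding ths' cond_sq_moment_tendsto_0_iff by (rule exp_traj_tendsto_0_if_outer)
    qed
  next
    assume exp: "robustly_stable_exp n m N M K (\<phi> ` S) ti"
    show "robust_ms_stable n m K p S ti"
      unfolding robust_ms_stable_def
    proof (intro allI impI)
      fix x0 ths assume ths: "adm ti S ths"
      interpret smp_system n m p ths K N M \<phi> by (rule model[OF ths])
      show "cond_sq_moment n m K p ths x0 \<longlonglongrightarrow> 0"
        using exp adm_image[OF ths] unfolding robustly_stable_exp_def cond_sq_moment_tendsto_0_iff by blast
    qed
  qed
qed

end
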